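(* Let $1\le k<N/2$. There is a quantum algorithm that, for every unknown $x\in\{0,1\}^N$ with $wt(x)=k$, finds $x$ with bounded error using $O(k^{1/4})$ queries to the quasi B-oracle for $x$.
   Context: For $x,q\in\{0,1\}^N$ let $x\wedge q$ be the bitwise AND and $wt$ the Hamming weight. The quasi B-oracle is a stochastic oracle with random answer $\zeta(x;q)\in\{0,1\}$ where $\Pr[\zeta(x;q)=0]=0$ if $wt(x\wedge q)$ is odd, $\Pr[\zeta(x;q)=0]=\sqrt{1/wt(x\wedge q)}$ if $wt(x\wedge q)$ is positive and even, and $\Pr[\zeta(x;q)=0]=1$ if $wt(x\wedge q)=0$. It is accessed through the unitary $\tilde O_x|q,a,z\rangle=\sqrt{\Pr[\zeta(x;q)=0]}\,|q,a,z\rangle+(-1)^a\sqrt{\Pr[\zeta(x;q)=1]}\,|q,a\oplus1,z\rangle$, where $a$ is a one-bit answer register and $z$ a workspace register. (It models a balance where the weighed coin set $\{i:q_i=1\}$ is split between the two pans uniformly at random.) Bounded error: output equals $x$ with probability at least a constant such as $2/3$. *)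

theory Defs
  imports Complex_Main
begin

text \<open>An input x \<in> {0,1}^N is represented by the set of indices i < N with x_i = 1;
  likewise a query string q. Then wt(x \<and> q) = card (x \<inter> q).
  Basis states are triples (q, a, z): query register q \<subseteq> {..<N}, one-bit answer
  register a, workspace register z < W.\<close>

type_synonym basis = "nat set \<times> bool \<times> nat"
type_synonym qstate = "basis \<Rightarrow> complex"
type_synonym qmatrix = "basis \<Rightarrow> basis \<Rightarrow> complex"  (* M b' b = <b'|M|b> *)

definition Basis :: "nat \<Rightarrow> nat \<Rightarrow> basis set" where
  "Basis N W = {(q, a, z). q \<subseteq> {..<N} \<and> z < W}"

definition apply_mat :: "nat \<Rightarrow> nat \<Rightarrow> qmatrix \<Rightarrow> qstate \<Rightarrow> qstate" where
  "apply_mat N W M \<psi> = (\<lambda>b'. \<Sum>b\<in>Basis N W. M b' b * \<psi> b)"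

definition is_unitary :: "nat \<Rightarrow> nat \<Rightarrow> qmatrix \<Rightarrow> bool" where
  "is_unitary N W M \<longleftrightarrow>
     (\<forall>b1\<in>Basis N W. \<forall>b2\<in>Basis N W.
        (\<Sum>b\<in>Basis N W. cnj (M b b1) * M b b2) = (if b1 = b2 then 1 else 0))"

definition prob0 :: "nat set \<Rightarrow> nat set \<Rightarrow> real" where
  "prob0 x q = (let w = card (x \<inter> q) in
      if w = 0 then 1 else if odd w then 0 else sqrt (1 / real w))"

definition quasiB :: "nat set \<Rightarrow> qmatrix" where
  "quasiB x = (\<lambda>(q', a', z') (q, a, z).
     if q' = q \<and> z' = z then
       (if a' = a then complex_of_real (sqrt (prob0 x q))
        else (if a then -1 else 1) * complex_of_real (sqrt (1 - prob0 x q)))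
     else 0)"

text \<open>Running U_0, O, U_1, O, ..., O, U_T on a state (T = length Us - 1 oracle calls).\<close>
fun run :: "nat \<Rightarrow> nat \<Rightarrow> nat set \<Rightarrow> qmatrix list \<Rightarrow> qstate \<Rightarrow> qstate" where
  "run N W x [] \<psi> = \<psi>"
| "run N W x [U] \<psi> = apply_mat N W U \<psi>"
| "run N W x (U # V # Us) \<psi> =
     run N W x (V # Us) (apply_mat N W (quasiB x) (apply_mat N W U \<psi>))"

definition init_state :: qstate where
  "init_state = (\<lambda>b. if b = ({}, False, 0) then 1 else 0)"

definition success_prob ::
  "nat \<Rightarrow> nat \<Rightarrow> qmatrix list \<Rightarrow> (basis \<Rightarrow> nat set) \<Rightarrow> nat set \<Rightarrow> real" where
  "success_prob N W Us out x =
     (\<Sum>b\<in>Basis N W. if out b = x then (cmod (run N W x Us init_state b))\<^sup>2 else 0)"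

end

theory Submission
  imports Defs
begin

text \<open>
  An answer register in the state (|0> +- i|1>)/sqrt 2 is an eigenvector of the 2x2 block of the
  quasi B-oracle, with eigenvalue l_q = sqrt p_q - i sqrt (1 - p_q) or its conjugate, so a query
  only multiplies the amplitude of the query string q by a phase.  Prepare all q uniformly
  together with a uniform counter z in {0..m}; during m queries branch z uses the eigenvalue l_q
  for its first z queries and its conjugate afterwards, collecting the phase
  P_z = l_q^z (conj l_q)^(m-z).  Reflecting the counter about the alternating unit vector
  ((-1)^z / sqrt (m+1)) and running m more queries with the conjugate schedule cancels P_z
  except for the reflected part, leaving the amplitude (1 - 2 |S_q|^2 / (m+1)^2) / sqrt (2^N)
  on q, where S_q = sum_z (-1)^z P_z.

  If |x \<inter> q| is odd then l_q = -i, all terms of S_q coincide and |S_q| = m + 1, which flips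
  the sign.  If it is even, S_q is a geometric sum with |S_q|^2 \<le> 1 / p_q \<le> sqrt k, which is
  negligible once (m+1)^2 \<ge> 16 sqrt k.  So q carries (-1)^|x \<inter> q| times at least 7/8,
  and a last Hadamard transform puts amplitude at least 7/8 on x, using 2m = O(k^(1/4)) queries.
\<close>

section \<open>Gates\<close>

definition agree :: "nat \<Rightarrow> nat \<Rightarrow> qstate \<Rightarrow> qstate \<Rightarrow> bool" where
  "agree N W \<psi> \<phi> \<longleftrightarrow> (\<forall>b\<in>Basis N W. \<psi> b = \<phi> b)"

lemma agree_trans: "agree N W \<psi> \<phi> \<Longrightarrow> agree N W \<phi> \<chi> \<Longrightarrow> agree N W \<psi> \<chi>"
  unfolding agree_def by simp

lemma apply_mat_cong: "agree N W \<psi> \<phi> \<Longrightarrow> apply_mat N W M \<psi> = apply_mat N W M \<phi>"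
  unfolding agree_def apply_mat_def by (auto intro!: sum.cong)

lemma agree_apply_mat:
  "agree N W \<psi> \<phi> \<Longrightarrow> agree N W (apply_mat N W M \<phi>) \<chi> \<Longrightarrow>
   agree N W (apply_mat N W M \<psi>) \<chi>"
  by (simp add: apply_mat_cong)

lemma mem_Basis: "(q, a, z) \<in> Basis N W \<longleftrightarrow> q \<subseteq> {..<N} \<and> z < W"
  unfolding Basis_def by auto

lemma Basis_eq: "Basis N W = Pow {..<N} \<times> UNIV \<times> {..<W}"
  unfolding Basis_def by auto

lemma finite_Basis [simp]: "finite (Basis N W)"
  by (simp add: Basis_eq)

lemma sum_Basis:
  "(\<Sum>b\<in>Basis N W. f b) = (\<Sum>q\<in>Pow {..<N}. \<Sum>a\<in>UNIV. \<Sum>z<W. f (q, a, z))"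
  by (simp add: Basis_eq sum.cartesian_product)

definition mat_mult :: "nat \<Rightarrow> nat \<Rightarrow> qmatrix \<Rightarrow> qmatrix \<Rightarrow> qmatrix" where
  "mat_mult N W A B = (\<lambda>b' b. \<Sum>c\<in>Basis N W. A b' c * B c b)"

lemma apply_mat_mat_mult:
  "apply_mat N W (mat_mult N W A B) \<psi> = apply_mat N W A (apply_mat N W B \<psi>)"
  unfolding apply_mat_def mat_mult_def
  by (auto simp: sum_distrib_right sum_distrib_left mult.assoc intro!: ext sum.swap)

lemma is_unitary_mat_mult:
  assumes A: "is_unitary N W A" and B: "is_unitary N W B"
  shows "is_unitary N W (mat_mult N W A B)"
  unfolding is_unitary_def
proof (intro ballI)
  fix b1 b2 assume b1: "b1 \<in> Basis N W" and b2: "b2 \<in> Basis N W"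
  have "(\<Sum>b\<in>Basis N W. cnj (mat_mult N W A B b b1) * mat_mult N W A B b b2)
     = (\<Sum>c\<in>Basis N W. \<Sum>d\<in>Basis N W.
          (\<Sum>b\<in>Basis N W. cnj (A b c) * A b d) * (cnj (B c b1) * B d b2))"
    unfolding mat_mult_def
    by (simp add: sum_distrib_left sum_distrib_right mult_ac, subst sum.swap, rule sum.cong, simp,
        subst sum.swap, simp)
  also have "\<dots> = (\<Sum>c\<in>Basis N W. \<Sum>d\<in>Basis N W. if c = d then cnj (B c b1) * B d b2 else 0)"
    using A unfolding is_unitary_def by (intro sum.cong refl) auto
  also have "\<dots> = (if b1 = b2 then 1 else 0)"
    using B b1 b2 unfolding is_unitary_def by (simp add: sum.delta)
  finally show "(\<Sum>b\<in>Basis N W. cnj (mat_mult N W A B b b1) * mat_mult N W A B b b2)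
      = (if b1 = b2 then 1 else 0)" .
qed

lemma if_zero_mult: "(if P then x else 0) * y = (if P then x * y else (0::'a::mult_zero))"
  by simp

lemma mult_if_zero: "y * (if P then x else 0) = (if P then y * x else (0::'a::mult_zero))"
  by simp

lemma sum_if_zero: "(\<Sum>x\<in>A. if P then f x else 0) = (if P then (\<Sum>x\<in>A. f x) else (0::'a::comm_monoid_add))"
  by simp

lemmas delta_simps = if_zero_mult mult_if_zero if_if_eq_conj[symmetric] sum_if_zero

definition unitary2 :: "(bool \<Rightarrow> bool \<Rightarrow> complex) \<Rightarrow> bool" where
  "unitary2 G \<longleftrightarrow> (\<forall>a1 a2. (\<Sum>a\<in>UNIV. cnj (G a a1) * G a a2) = (if a1 = a2 then 1 else 0))"

definition answer_gate :: "(nat \<Rightarrow> bool \<Rightarrow> bool \<Rightarrow> complex) \<Rightarrow> qmatrix" where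
  "answer_gate G = (\<lambda>(q', a', z') (q, a, z). if q' = q \<and> z' = z then G z a' a else 0)"

lemma apply_answer_gate:
  assumes "(q, a, z) \<in> Basis N W"
  shows "apply_mat N W (answer_gate G) \<psi> (q, a, z) = G z a True * \<psi> (q, True, z) + G z a False * \<psi> (q, False, z)"
  using assms unfolding apply_mat_def sum_Basis answer_gate_def mem_Basis
  by (simp add: delta_simps UNIV_bool cong: if_cong)

lemma is_unitary_answer_gate:
  assumes "\<And>z. z < W \<Longrightarrow> unitary2 (G z)"
  shows "is_unitary N W (answer_gate G)"
  unfolding is_unitary_def
proof (intro ballI)
  fix b1 b2 assume b1: "b1 \<in> Basis N W" and "b2 \<in> Basis N W"
  obtain q1 a1 z1 q2 a2 z2 where b: "b1 = (q1, a1, z1)" "b2 = (q2, a2, z2)"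
    by (cases b1, cases b2) auto
  have "(\<Sum>b\<in>Basis N W. cnj (answer_gate G b b1) * answer_gate G b b2)
     = (if q2 = q1 \<and> z2 = z1 then \<Sum>a\<in>UNIV. cnj (G z1 a a1) * G z1 a a2 else 0)"
    using b1 unfolding sum_Basis answer_gate_def b mem_Basis
    by (simp add: delta_simps cong: if_cong)
  then show "(\<Sum>b\<in>Basis N W. cnj (answer_gate G b b1) * answer_gate G b b2) = (if b1 = b2 then 1 else 0)"
    using assms b1 unfolding b unitary2_def mem_Basis by auto
qed

definition workspace_gate :: "(nat \<Rightarrow> nat \<Rightarrow> complex) \<Rightarrow> qmatrix" where
  "workspace_gate R = (\<lambda>(q', a', z') (q, a, z). if q' = q \<and> a' = a then R z' z else 0)"

lemma apply_workspace_gate: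
  assumes "(q, a, z) \<in> Basis N W"
  shows "apply_mat N W (workspace_gate R) \<psi> (q, a, z) = (\<Sum>z'<W. R z z' * \<psi> (q, a, z'))"
  using assms unfolding apply_mat_def sum_Basis workspace_gate_def mem_Basis
  by (simp add: delta_simps UNIV_bool cong: if_cong)

lemma is_unitary_workspace_gate:
  assumes "\<And>z1 z2. z1 < W \<Longrightarrow> z2 < W \<Longrightarrow> (\<Sum>z<W. cnj (R z z1) * R z z2) = (if z1 = z2 then 1 else 0)"
  shows "is_unitary N W (workspace_gate R)"
  unfolding is_unitary_def
proof (intro ballI)
  fix b1 b2 assume b1: "b1 \<in> Basis N W" and b2: "b2 \<in> Basis N W"
  obtain q1 a1 z1 q2 a2 z2 where b: "b1 = (q1, a1, z1)" "b2 = (q2, a2, z2)"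
    by (cases b1, cases b2) auto
  have "(\<Sum>b\<in>Basis N W. cnj (workspace_gate R b b1) * workspace_gate R b b2)
     = (if q2 = q1 \<and> a2 = a1 then \<Sum>z<W. cnj (R z z1) * R z z2 else 0)"
    using b1 unfolding sum_Basis workspace_gate_def b mem_Basis
    by (simp add: delta_simps UNIV_bool cong: if_cong)
  then show "(\<Sum>b\<in>Basis N W. cnj (workspace_gate R b b1) * workspace_gate R b b2) = (if b1 = b2 then 1 else 0)"
    using assms b1 b2 unfolding b mem_Basis by auto
qed

lemma sum_Pow_neg_one_card_Int:
  assumes "finite A" and "d \<subseteq> A" and "d \<noteq> {}"
  shows "(\<Sum>q\<in>Pow A. (-1::real) ^ card (q \<inter> d)) = 0"
proof -
  obtain i where i: "i \<in> d" using assms(3) by blast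
  define A' where "A' = A - {i}"
  have A: "A = insert i A'" and iA': "i \<notin> A'" and finA': "finite A'"
    using i assms(1,2) unfolding A'_def by auto
  have inj: "inj_on (insert i) (Pow A')"
    using iA' by (intro inj_onI) (auto simp: insert_ident)
  have flip: "(-1::real) ^ card (insert i q \<inter> d) = - ((-1) ^ card (q \<inter> d))" if "q \<in> Pow A'" for q
  proof -
    have "i \<notin> q" "finite q" using that iA' finA' finite_subset by auto
    then have "card (insert i q \<inter> d) = Suc (card (q \<inter> d))"
      using i by (simp add: Int_insert_left)
    then show ?thesis by simp
  qed
  have "(\<Sum>q\<in>Pow A. (-1::real) ^ card (q \<inter> d))
      = (\<Sum>q\<in>Pow A'. (-1::real) ^ card (q \<inter> d)) + (\<Sum>q\<in>insert i ` Pow A'. (-1::real) ^ card (q \<inter> d))"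
    unfolding A Pow_insert using finA' iA' by (intro sum.union_disjoint) auto
  also have "(\<Sum>q\<in>insert i ` Pow A'. (-1::real) ^ card (q \<inter> d)) = - (\<Sum>q\<in>Pow A'. (-1::real) ^ card (q \<inter> d))"
    using inj flip by (simp add: sum.reindex sum_negf)
  finally show ?thesis by simp
qed

lemma card_Int_add_card_Int:
  assumes "finite q"
  shows "card (q \<inter> s) + card (q \<inter> t) = card (q \<inter> ((s - t) \<union> (t - s))) + 2 * card (q \<inter> s \<inter> t)"
proof -
  have "card (q \<inter> s) + card (q \<inter> t) = card ((q \<inter> s) \<union> (q \<inter> t)) + card (q \<inter> s \<inter> t)"
    using assms by (subst card_Un_Int) (auto simp: Int_ac)
  also have "(q \<inter> s) \<union> (q \<inter> t) = (q \<inter> ((s - t) \<union> (t - s))) \<union> (q \<inter> s \<inter> t)"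
    by blast
  also have "card \<dots> = card (q \<inter> ((s - t) \<union> (t - s))) + card (q \<inter> s \<inter> t)"
    using assms by (intro card_Un_disjoint) auto
  finally show ?thesis by simp
qed

lemma sum_Pow_characters_orthogonal:
  assumes "finite A" and s: "s \<subseteq> A" and t: "t \<subseteq> A"
  shows "(\<Sum>q\<in>Pow A. (-1::real) ^ card (q \<inter> s) * (-1) ^ card (q \<inter> t)) = (if s = t then 2 ^ card A else 0)"
proof -
  define d where "d = (s - t) \<union> (t - s)"
  have "(-1::real) ^ card (q \<inter> s) * (-1) ^ card (q \<inter> t) = (-1) ^ card (q \<inter> d)" if "q \<in> Pow A" for q
  proof -
    have "finite q" using that assms(1) finite_subset by auto
    then have "(-1::real) ^ card (q \<inter> s) * (-1) ^ card (q \<inter> t)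
        = (-1) ^ (card (q \<inter> d) + 2 * card (q \<inter> s \<inter> t))"
      unfolding d_def by (simp add: power_add[symmetric] card_Int_add_card_Int)
    then show ?thesis by (simp add: power_add power_mult)
  qed
  then have "(\<Sum>q\<in>Pow A. (-1::real) ^ card (q \<inter> s) * (-1) ^ card (q \<inter> t))
      = (\<Sum>q\<in>Pow A. (-1::real) ^ card (q \<inter> d))"
    by (rule sum.cong[OF refl])
  also have "\<dots> = (if s = t then 2 ^ card A else 0)"
  proof (cases "s = t")
    case True
    then show ?thesis unfolding d_def using assms(1) by (simp add: card_Pow)
  next
    case False
    then have "d \<noteq> {}" unfolding d_def by blast
    then show ?thesis using False assms sum_Pow_neg_one_card_Int[of A d] unfolding d_def by auto
  qed
  finally show ?thesis .
qed

definition hadamard_coeff :: "nat \<Rightarrow> nat set \<Rightarrow> nat set \<Rightarrow> real" where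
  "hadamard_coeff N q' q = (-1) ^ card (q' \<inter> q) / sqrt (2 ^ N)"

definition hadamard :: "nat \<Rightarrow> qmatrix" where
  "hadamard N = (\<lambda>(q', a', z') (q, a, z). if a' = a \<and> z' = z then complex_of_real (hadamard_coeff N q' q) else 0)"

lemma apply_hadamard:
  assumes "(q, a, z) \<in> Basis N W"
  shows "apply_mat N W (hadamard N) \<psi> (q, a, z)
    = (\<Sum>q'\<in>Pow {..<N}. complex_of_real (hadamard_coeff N q q') * \<psi> (q', a, z))"
  using assms unfolding apply_mat_def sum_Basis hadamard_def mem_Basis
  by (simp add: delta_simps UNIV_bool cong: if_cong)

lemma hadamard_coeff_orthonormal:
  assumes "s \<subseteq> {..<N}" and "t \<subseteq> {..<N}"
  shows "(\<Sum>q\<in>Pow {..<N}. hadamard_coeff N q s * hadamard_coeff N q t) = (if s = t then 1 else 0)"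
  using sum_Pow_characters_orthogonal[OF _ assms]
  by (simp add: hadamard_coeff_def sum_divide_distrib[symmetric])

lemma is_unitary_hadamard: "is_unitary N W (hadamard N)"
  unfolding is_unitary_def
proof (intro ballI)
  fix b1 b2 assume b1: "b1 \<in> Basis N W" and b2: "b2 \<in> Basis N W"
  obtain q1 a1 z1 q2 a2 z2 where b: "b1 = (q1, a1, z1)" "b2 = (q2, a2, z2)"
    by (cases b1, cases b2) auto
  have "(\<Sum>b\<in>Basis N W. cnj (hadamard N b b1) * hadamard N b b2)
     = (if a2 = a1 \<and> z2 = z1 then complex_of_real (\<Sum>q\<in>Pow {..<N}. hadamard_coeff N q q1 * hadamard_coeff N q q2) else 0)"
    using b1 unfolding sum_Basis hadamard_def b mem_Basis
    by (simp add: delta_simps UNIV_bool cong: if_cong)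
  then show "(\<Sum>b\<in>Basis N W. cnj (hadamard N b b1) * hadamard N b b2) = (if b1 = b2 then 1 else 0)"
    using b1 b2 unfolding b mem_Basis by (auto simp: hadamard_coeff_orthonormal)
qed

definition householder :: "(nat \<Rightarrow> real) \<Rightarrow> nat \<Rightarrow> nat \<Rightarrow> complex" where
  "householder v z' z = complex_of_real ((if z' = z then 1 else 0) - 2 * v z' * v z)"

lemma householder_apply:
  assumes "z < W"
  shows "(\<Sum>z'<W. householder v z z' * P z') = P z - 2 * complex_of_real (v z) * (\<Sum>z'<W. complex_of_real (v z') * P z')"
proof -
  have "(\<Sum>z'<W. householder v z z' * P z')
      = (\<Sum>z'<W. (if z = z' then P z' else 0) - 2 * complex_of_real (v z) * (complex_of_real (v z') * P z'))"
    by (intro sum.cong refl) (simp add: householder_def algebra_simps)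
  then show ?thesis using assms by (simp add: sum_subtractf sum_distrib_left)
qed

lemma householder_orthonormal:
  assumes v: "(\<Sum>z<W. (v z)\<^sup>2) = 1" and z1: "z1 < W" and z2: "z2 < W"
  shows "(\<Sum>z<W. cnj (householder v z z1) * householder v z z2) = (if z1 = z2 then 1 else 0)"
proof -
  define h where "h z' z = (if z' = z then 1 else 0) - 2 * v z' * v z" for z' z
  have "h z z1 * h z z2 = (if z = z1 then h z1 z2 else 0) - (if z = z2 then 2 * v z1 * v z else 0)
      + 4 * v z1 * v z2 * (v z)\<^sup>2" for z
    by (simp add: h_def algebra_simps power2_eq_square)
  then have "(\<Sum>z<W. h z z1 * h z z2) = h z1 z2 - 2 * v z1 * v z2 + 4 * v z1 * v z2 * (\<Sum>z<W. (v z)\<^sup>2)"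
    using z1 z2 by (simp add: sum.distrib sum_subtractf sum_distrib_left)
  also have "\<dots> = (if z1 = z2 then 1 else 0)"
    using v by (simp add: h_def)
  finally show ?thesis
    unfolding householder_def h_def[symmetric] by (simp flip: of_real_mult of_real_sum)
qed

lemma is_unitary_householder: "(\<Sum>z<W. (v z)\<^sup>2) = 1 \<Longrightarrow> is_unitary N W (workspace_gate (householder v))"
  by (rule is_unitary_workspace_gate) (rule householder_orthonormal)

lemma householder_quadratic_form:
  "(\<Sum>z<W. cnj (P z) * (\<Sum>z'<W. householder v z z' * P z'))
     = (\<Sum>z<W. cnj (P z) * P z) - 2 * cnj (\<Sum>z<W. complex_of_real (v z) * P z) * (\<Sum>z<W. complex_of_real (v z) * P z)"
proof -
  define Y where "Y = (\<Sum>z<W. complex_of_real (v z) * P z)"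
  have "(\<Sum>z<W. cnj (P z) * (\<Sum>z'<W. householder v z z' * P z'))
      = (\<Sum>z<W. cnj (P z) * P z - 2 * (complex_of_real (v z) * cnj (P z)) * Y)"
    unfolding Y_def
  proof (intro sum.cong refl)
    fix z assume "z \<in> {..<W}"
    then show "cnj (P z) * (\<Sum>z'<W. householder v z z' * P z')
        = cnj (P z) * P z - 2 * (complex_of_real (v z) * cnj (P z)) * (\<Sum>z<W. complex_of_real (v z) * P z)"
      by (simp only: householder_apply lessThan_iff) (simp add: algebra_simps)
  qed
  also have "\<dots> = (\<Sum>z<W. cnj (P z) * P z) - 2 * (\<Sum>z<W. complex_of_real (v z) * cnj (P z)) * Y"
    by (simp add: sum_subtractf sum_distrib_left sum_distrib_right mult.assoc)
  also have "(\<Sum>z<W. complex_of_real (v z) * cnj (P z)) = cnj Y"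
    unfolding Y_def by simp
  finally show ?thesis unfolding Y_def .
qed

section \<open>The oracle in its eigenbasis\<close>

definition zero_answer :: "(nat set \<Rightarrow> nat \<Rightarrow> complex) \<Rightarrow> qstate" where
  "zero_answer G = (\<lambda>(q, a, z). if a then 0 else G q z)"

definition eigvec :: "bool \<Rightarrow> bool \<Rightarrow> complex" where
  "eigvec s a = (if a then (if s then \<i> else -\<i>) else 1) / complex_of_real (sqrt 2)"

definition eig_state :: "(nat set \<Rightarrow> nat \<Rightarrow> complex) \<Rightarrow> (nat \<Rightarrow> bool) \<Rightarrow> qstate" where
  "eig_state G lab = (\<lambda>(q, a, z). G q z * eigvec (lab z) a)"

lemma agree_zero_answerI:
  "(\<And>q z. q \<subseteq> {..<N} \<Longrightarrow> z < W \<Longrightarrow> G q z = G' q z) \<Longrightarrow>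
   agree N W (zero_answer G) (zero_answer G')"
  unfolding agree_def zero_answer_def Basis_def by auto

lemma hadamard_zero_answer:
  "agree N W (apply_mat N W (hadamard N) (zero_answer G))
     (zero_answer (\<lambda>q z. \<Sum>q'\<in>Pow {..<N}. complex_of_real (hadamard_coeff N q q') * G q' z))"
  unfolding agree_def by (auto simp: apply_hadamard zero_answer_def)

lemma workspace_gate_zero_answer:
  "agree N W (apply_mat N W (workspace_gate R) (zero_answer G))
     (zero_answer (\<lambda>q z. \<Sum>z'<W. R z z' * G q z'))"
  unfolding agree_def by (auto simp: apply_workspace_gate zero_answer_def)

definition prep :: "bool \<Rightarrow> bool \<Rightarrow> bool \<Rightarrow> complex" where
  "prep s a' a = eigvec (if a then \<not> s else s) a'"

definition unprep :: "bool \<Rightarrow> bool \<Rightarrow> bool \<Rightarrow> complex" where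
  "unprep s a' a = cnj (prep s a a')"

definition cond_Z :: "bool \<Rightarrow> bool \<Rightarrow> bool \<Rightarrow> complex" where
  "cond_Z P a' a = (if a' = a then (if P \<and> a then -1 else 1) else 0)"

lemma sqrt2_mult_sqrt2: "complex_of_real (sqrt 2) * complex_of_real (sqrt 2) = 2"
  by (simp flip: of_real_mult)

lemma unitary2_prep: "unitary2 (prep s)"
  unfolding unitary2_def prep_def eigvec_def
  by (cases s) (auto simp: UNIV_bool sqrt2_mult_sqrt2 field_simps)

lemma unitary2_unprep: "unitary2 (unprep s)"
  unfolding unitary2_def unprep_def prep_def eigvec_def
  by (cases s) (auto simp: UNIV_bool sqrt2_mult_sqrt2 field_simps)

lemma unitary2_cond_Z: "unitary2 (cond_Z P)"
  unfolding unitary2_def cond_Z_def by (auto simp: UNIV_bool)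

lemma prep_zero_answer:
  "agree N W (apply_mat N W (answer_gate (\<lambda>z. prep (lab z))) (zero_answer G)) (eig_state G lab)"
  unfolding agree_def
  by (force simp: apply_answer_gate zero_answer_def eig_state_def prep_def)

lemma unprep_eig_state:
  "agree N W (apply_mat N W (answer_gate (\<lambda>z. unprep (lab z))) (eig_state G lab)) (zero_answer G)"
  unfolding agree_def
proof (intro ballI)
  fix b assume "b \<in> Basis N W"
  moreover obtain q a z where "b = (q, a, z)" by (cases b)
  ultimately show "apply_mat N W (answer_gate (\<lambda>z. unprep (lab z))) (eig_state G lab) b = zero_answer G b"
    by (cases a; cases "lab z")
      (simp_all add: apply_answer_gate zero_answer_def eig_state_def unprep_def prep_def eigvec_def
        field_simps sqrt2_mult_sqrt2)
qed

lemma cond_Z_eig_state: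
  "agree N W (apply_mat N W (answer_gate (\<lambda>z. cond_Z (P z))) (eig_state G lab)) (eig_state G (\<lambda>z. lab z \<noteq> P z))"
  unfolding agree_def
proof (intro ballI)
  fix b assume "b \<in> Basis N W"
  moreover obtain q a z where "b = (q, a, z)" by (cases b)
  ultimately show "apply_mat N W (answer_gate (\<lambda>z. cond_Z (P z))) (eig_state G lab) b
      = eig_state G (\<lambda>z. lab z \<noteq> P z) b"
    by (cases a; cases "lab z"; cases "P z")
      (simp_all add: apply_answer_gate eig_state_def cond_Z_def eigvec_def)
qed

definition oracle_phase :: "nat set \<Rightarrow> nat set \<Rightarrow> complex" where
  "oracle_phase x q = complex_of_real (sqrt (prob0 x q)) - \<i> * complex_of_real (sqrt (1 - prob0 x q))"

definition eigval :: "nat set \<Rightarrow> nat set \<Rightarrow> bool \<Rightarrow> complex" where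
  "eigval x q s = (if s then oracle_phase x q else cnj (oracle_phase x q))"

lemma apply_quasiB:
  assumes "(q, a, z) \<in> Basis N W"
  shows "apply_mat N W (quasiB x) \<psi> (q, a, z) =
     complex_of_real (sqrt (prob0 x q)) * \<psi> (q, a, z)
     + (if a then 1 else -1) * complex_of_real (sqrt (1 - prob0 x q)) * \<psi> (q, \<not> a, z)"
  using assms unfolding apply_mat_def sum_Basis quasiB_def mem_Basis
  by (cases a) (simp_all add: delta_simps UNIV_bool cong: if_cong)

lemma quasiB_eig_state:
  "agree N W (apply_mat N W (quasiB x) (eig_state G lab)) (eig_state (\<lambda>q z. G q z * eigval x q (lab z)) lab)"
  unfolding agree_def
proof (intro ballI)
  fix b assume "b \<in> Basis N W"
  moreover obtain q a z where "b = (q, a, z)" by (cases b)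
  ultimately show "apply_mat N W (quasiB x) (eig_state G lab) b = eig_state (\<lambda>q z. G q z * eigval x q (lab z)) lab b"
    by (cases a; cases "lab z")
      (simp_all add: apply_quasiB eig_state_def eigval_def oracle_phase_def eigvec_def algebra_simps
        add_divide_distrib diff_divide_distrib)
qed

definition query_step :: "nat \<Rightarrow> nat \<Rightarrow> nat set \<Rightarrow> qmatrix \<Rightarrow> qstate \<Rightarrow> qstate" where
  "query_step N W x U \<psi> = apply_mat N W (quasiB x) (apply_mat N W U \<psi>)"

lemma run_snoc: "run N W x (Us @ [V]) \<psi> = apply_mat N W V (fold (query_step N W x) Us \<psi>)"
proof (induction Us arbitrary: \<psi>)
  case (Cons U Us)
  then show ?case by (cases Us) (simp_all add: query_step_def)
qed simp

definition flip_gate :: "nat \<Rightarrow> qmatrix" where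
  "flip_gate t = answer_gate (\<lambda>z. cond_Z (z = t))"

text \<open>L \<tau> z is the eigenvector label of counter branch z during query number \<tau>, counted from 0.\<close>

definition accumulated_phase ::
    "nat set \<Rightarrow> (nat \<Rightarrow> nat \<Rightarrow> bool) \<Rightarrow> nat \<Rightarrow> nat set \<Rightarrow> nat \<Rightarrow> complex" where
  "accumulated_phase x L n q z = (\<Prod>\<tau><n. eigval x q (L \<tau> z))"

lemma query_step_eig_state:
  assumes "agree N W (apply_mat N W U \<psi>) (eig_state G lab)"
  shows "agree N W (query_step N W x U \<psi>) (eig_state (\<lambda>q z. G q z * eigval x q (lab z)) lab)"
  unfolding query_step_def using assms quasiB_eig_state by (rule agree_apply_mat)

lemma fold_query_flips:
  assumes L: "\<And>t z. L (Suc t) z = (L t z \<noteq> (z = Suc t))"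
    and "agree N W \<psi> (eig_state (\<lambda>q z. G q z * accumulated_phase x L (Suc t) q z) (L t))"
  shows "agree N W (fold (query_step N W x) (map flip_gate [Suc t..<Suc t + k]) \<psi>)
           (eig_state (\<lambda>q z. G q z * accumulated_phase x L (Suc t + k) q z) (L (t + k)))"
  using assms(2)
proof (induction k arbitrary: t \<psi>)
  case (Suc k)
  have "agree N W (apply_mat N W (flip_gate (Suc t)) \<psi>)
      (eig_state (\<lambda>q z. G q z * accumulated_phase x L (Suc t) q z) (L (Suc t)))"
    using Suc.prems cond_Z_eig_state unfolding flip_gate_def L[abs_def] by (rule agree_apply_mat)
  then have "agree N W (query_step N W x (flip_gate (Suc t)) \<psi>)
      (eig_state (\<lambda>q z. G q z * accumulated_phase x L (Suc (Suc t)) q z) (L (Suc t)))"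
    by (rule query_step_eig_state[THEN agree_trans]) (simp add: agree_def eig_state_def accumulated_phase_def mult_ac)
  moreover have "[Suc t..<Suc t + Suc k] = Suc t # [Suc (Suc t)..<Suc (Suc t) + k]"
    by (simp add: upt_conv_Cons)
  ultimately show ?case using Suc.IH[of "query_step N W x (flip_gate (Suc t)) \<psi>" "Suc t"] by simp
qed simp

lemma query_segment:
  assumes L: "\<And>t z. L (Suc t) z = (L t z \<noteq> (z = Suc t))" and "m \<ge> 1"
    and "agree N W (apply_mat N W U \<psi>) (eig_state G (L 0))"
  shows "agree N W (fold (query_step N W x) (U # map flip_gate [1..<m]) \<psi>)
           (eig_state (\<lambda>q z. G q z * accumulated_phase x L m q z) (L (m - 1)))"
proof -
  have "agree N W (query_step N W x U \<psi>) (eig_state (\<lambda>q z. G q z * accumulated_phase x L (Suc 0) q z) (L 0))"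
    using query_step_eig_state[OF assms(3)] by (simp add: accumulated_phase_def)
  from fold_query_flips[OF L this, of "m - 1"] show ?thesis
    using \<open>m \<ge> 1\<close> by simp
qed

lemma prod_lessThan_if_less:
  "z \<le> n \<Longrightarrow> (\<Prod>\<tau><n. if \<tau> < z then a else b) = a ^ z * (b::'a::comm_monoid_mult) ^ (n - z)"
proof -
  assume "z \<le> n"
  then have "{..<n} \<inter> {\<tau>. \<tau> < z} = {..<z}" and "{..<n} \<inter> - {\<tau>. \<tau> < z} = {z..<n}"
    by auto
  then show ?thesis by (simp add: prod.If_cases)
qed

lemma accumulated_phase_counting:
  "z \<le> m \<Longrightarrow> accumulated_phase x (\<lambda>t z. t < z) m q z = oracle_phase x q ^ z * cnj (oracle_phase x q) ^ (m - z)"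
  by (simp add: accumulated_phase_def eigval_def prod_lessThan_if_less)

lemma accumulated_phase_reverse_counting:
  assumes "z \<le> m"
  shows "accumulated_phase x (\<lambda>t z. z \<le> t) m q z = cnj (accumulated_phase x (\<lambda>t z. t < z) m q z)"
proof -
  have "accumulated_phase x (\<lambda>t z. z \<le> t) m q z
      = (\<Prod>\<tau><m. if \<tau> < z then cnj (oracle_phase x q) else oracle_phase x q)"
    unfolding accumulated_phase_def eigval_def by (intro prod.cong) auto
  then show ?thesis
    using assms by (simp add: prod_lessThan_if_less accumulated_phase_counting mult.commute)
qed

section \<open>Alternating phase sums\<close>

lemma unit_complex_cnj_mult: "norm (l::complex) = 1 \<Longrightarrow> cnj l * l = 1"
  using complex_norm_square[of l] by (simp add: mult.commute)

definition alternating_phase_sum :: "complex \<Rightarrow> nat \<Rightarrow> complex" where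
  "alternating_phase_sum l m = (\<Sum>z<Suc m. (-1) ^ z * (l ^ z * cnj l ^ (m - z)))"

lemma alternating_phase_sum_neg_ii: "alternating_phase_sum (-\<i>) m = of_nat (Suc m) * \<i> ^ m"
proof -
  have "(-1) ^ z * ((-\<i>) ^ z * cnj (-\<i>) ^ (m - z)) = \<i> ^ m" if "z < Suc m" for z
  proof -
    have "(-1) ^ z * ((-\<i>) ^ z * cnj (-\<i>) ^ (m - z)) = \<i> ^ z * \<i> ^ (m - z)"
      by (simp add: power_mult_distrib[symmetric])
    also have "\<dots> = \<i> ^ m" using that by (simp flip: power_add)
    finally show ?thesis .
  qed
  then show ?thesis unfolding alternating_phase_sum_def by simp
qed

lemma norm_alternating_phase_sum_le:
  assumes l: "norm l = 1" and Re: "0 < Re l"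
  shows "norm (alternating_phase_sum l m) \<le> 1 / Re l"
proof -
  have cl: "cnj l * l = 1" using l by (rule unit_complex_cnj_mult)
  define \<mu> where "\<mu> = - (l * l)"
  have summand: "(-1) ^ z * (l ^ z * cnj l ^ (m - z)) = cnj l ^ m * \<mu> ^ z" if "z < Suc m" for z
  proof -
    have split: "cnj l ^ m = cnj l ^ (m - z) * cnj l ^ z"
      using that by (simp flip: power_add)
    have "\<mu> = (-1) * (l * l)"
      unfolding \<mu>_def by simp
    then have \<mu>_pow: "\<mu> ^ z = (-1) ^ z * (l ^ z * l ^ z)"
      by (simp only: power_mult_distrib)
    have "cnj l ^ m * \<mu> ^ z = (-1) ^ z * (l ^ z * cnj l ^ (m - z)) * (cnj l * l) ^ z"
      by (simp only: split \<mu>_pow power_mult_distrib mult_ac)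
    then show ?thesis using cl by simp
  qed
  have "1 - \<mu> = l * (l + cnj l)"
    using cl by (simp add: \<mu>_def algebra_simps)
  then have norm_1_minus: "norm (1 - \<mu>) = 2 * Re l"
    using l Re by (simp add: complex_add_cnj norm_mult)
  then have "\<mu> \<noteq> 1" using Re by auto
  have "alternating_phase_sum l m = cnj l ^ m * (\<Sum>z<Suc m. \<mu> ^ z)"
    unfolding alternating_phase_sum_def sum_distrib_left using summand by simp
  also have "(\<Sum>z<Suc m. \<mu> ^ z) = (\<mu> ^ Suc m - 1) / (\<mu> - 1)"
    using \<open>\<mu> \<noteq> 1\<close> by (rule geometric_sum)
  finally have "norm (alternating_phase_sum l m) = norm (\<mu> ^ Suc m - 1) / (2 * Re l)"
    using l norm_1_minus by (simp add: norm_mult norm_divide norm_power norm_minus_commute)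
  also have "\<dots> \<le> 2 / (2 * Re l)"
  proof (rule divide_right_mono)
    have "norm \<mu> = 1" using l by (simp add: \<mu>_def norm_mult)
    then have "norm (\<mu> ^ Suc m) = 1"
      by (simp only: norm_power power_one)
    then show "norm (\<mu> ^ Suc m - 1) \<le> 2"
      using norm_triangle_ineq4[of "\<mu> ^ Suc m" 1] by simp
  qed (use Re in simp)
  finally show ?thesis using Re by simp
qed

definition alternating_unit :: "nat \<Rightarrow> nat \<Rightarrow> real" where
  "alternating_unit W z = (-1) ^ z / sqrt W"

lemma sum_sq_alternating_unit: "0 < W \<Longrightarrow> (\<Sum>z<W. (alternating_unit W z)\<^sup>2) = 1"
  by (simp add: alternating_unit_def power_divide power_mult_distrib flip: power_mult)

lemma householder_alternating_phase_form:
  assumes "norm l = 1"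
  shows "(\<Sum>z<Suc m. cnj (l ^ z * cnj l ^ (m - z)) *
            (\<Sum>z'<Suc m. householder (alternating_unit (Suc m)) z z' * (l ^ z' * cnj l ^ (m - z'))))
       = complex_of_real (real (Suc m) - 2 * (norm (alternating_phase_sum l m))\<^sup>2 / real (Suc m))"
proof -
  define Y where "Y = (\<Sum>z<Suc m. complex_of_real (alternating_unit (Suc m) z) * (l ^ z * cnj l ^ (m - z)))"
  have "cnj (l ^ z * cnj l ^ (m - z)) * (l ^ z * cnj l ^ (m - z)) = 1" for z
    using assms by (intro unit_complex_cnj_mult) (simp add: norm_mult norm_power)
  then have "(\<Sum>z<Suc m. cnj (l ^ z * cnj l ^ (m - z)) * (l ^ z * cnj l ^ (m - z))) = of_nat (Suc m)"
    by simp
  moreover have "Y = complex_of_real (1 / sqrt (Suc m)) * alternating_phase_sum l m"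
    unfolding Y_def alternating_phase_sum_def alternating_unit_def sum_distrib_left
    by (intro sum.cong refl) (simp add: mult_ac)
  then have "(norm Y)\<^sup>2 = (norm (alternating_phase_sum l m))\<^sup>2 / real (Suc m)"
    by (simp add: norm_divide power_divide)
  then have "cnj Y * Y = complex_of_real ((norm (alternating_phase_sum l m))\<^sup>2 / real (Suc m))"
    using complex_norm_square[of Y] by (simp add: mult.commute)
  ultimately show ?thesis
    unfolding householder_quadratic_form Y_def[symmetric] by (simp add: mult.assoc)
qed

lemma prob0_bounds: "0 \<le> prob0 x q" "prob0 x q \<le> 1"
  unfolding prob0_def Let_def by (auto simp: real_sqrt_le_1_iff)

lemma oracle_phase_Complex: "oracle_phase x q = Complex (sqrt (prob0 x q)) (- sqrt (1 - prob0 x q))"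
  by (simp add: complex_eq_iff oracle_phase_def)

lemma norm_oracle_phase: "norm (oracle_phase x q) = 1"
  using prob0_bounds[of x q] by (simp add: oracle_phase_Complex complex_norm)

lemma oracle_phase_odd: "odd (card (x \<inter> q)) \<Longrightarrow> oracle_phase x q = -\<i>"
  by (auto simp: oracle_phase_def prob0_def Let_def elim: oddE)

lemma norm_alternating_oracle_phase_sum_even:
  assumes "even (card (x \<inter> q))"
  shows "(norm (alternating_phase_sum (oracle_phase x q) m))\<^sup>2 \<le> 1 / prob0 x q"
proof -
  have p: "0 < prob0 x q"
    using assms unfolding prob0_def Let_def by auto
  then have "norm (alternating_phase_sum (oracle_phase x q) m) \<le> 1 / sqrt (prob0 x q)"
    using norm_alternating_phase_sum_le[OF norm_oracle_phase] by (simp add: oracle_phase_Complex)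
  then have "(norm (alternating_phase_sum (oracle_phase x q) m))\<^sup>2 \<le> (1 / sqrt (prob0 x q))\<^sup>2"
    by (simp add: power_mono)
  then show ?thesis using p by (simp add: power_divide)
qed

lemma inverse_prob0_le_sqrt_card:
  assumes "finite x" and "x \<noteq> {}" and "even (card (x \<inter> q))"
  shows "1 / prob0 x q \<le> sqrt (card x)"
proof (cases "card (x \<inter> q) = 0")
  case True
  then show ?thesis using assms by (simp add: prob0_def Let_def Suc_le_eq card_gt_0_iff)
next
  case False
  then have "1 / prob0 x q = sqrt (card (x \<inter> q))"
    using assms(3) by (simp add: prob0_def Let_def real_sqrt_divide)
  also have "\<dots> \<le> sqrt (card x)"
    using assms(1) by (simp add: card_mono)
  finally show ?thesis .
qed

lemma signed_term_ge:
  assumes "finite x" and "x \<noteq> {}" and W: "16 * sqrt (card x) \<le> (real (Suc m))\<^sup>2"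
  shows "7/8 \<le> (-1) ^ card (x \<inter> q) *
    (1 - 2 * (norm (alternating_phase_sum (oracle_phase x q) m))\<^sup>2 / (real (Suc m))\<^sup>2)"
proof (cases "odd (card (x \<inter> q))")
  case True
  then have "norm (alternating_phase_sum (oracle_phase x q) m) = real (Suc m)"
    by (simp only: oracle_phase_odd[OF True] alternating_phase_sum_neg_ii norm_mult norm_power
        norm_of_nat norm_ii power_one mult_1_right)
  then show ?thesis using True by simp
next
  case False
  then have "(norm (alternating_phase_sum (oracle_phase x q) m))\<^sup>2 \<le> sqrt (card x)"
    using norm_alternating_oracle_phase_sum_even inverse_prob0_le_sqrt_card[OF assms(1,2)] order_trans
    by blast
  then have "(norm (alternating_phase_sum (oracle_phase x q) m))\<^sup>2 / (real (Suc m))\<^sup>2 \<le> 1/16"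
    using W by (simp add: field_simps)
  then show ?thesis using False by simp
qed

section \<open>The search algorithm\<close>

definition unit_e0_minus_uniform :: "nat \<Rightarrow> nat \<Rightarrow> real" where
  "unit_e0_minus_uniform W z = ((if z = 0 then 1 else 0) - 1 / sqrt W) / sqrt (2 * (1 - 1 / sqrt W))"

lemma sum_sq_unit_e0_minus_uniform:
  assumes W: "2 \<le> W"
  shows "(\<Sum>z<W. (unit_e0_minus_uniform W z)\<^sup>2) = 1"
proof -
  define r where "r = 1 / sqrt (real W)"
  have r: "r < 1" "real W * r\<^sup>2 = 1"
    using W by (simp_all add: r_def power_divide)
  have "{..<W} = insert 0 {1..<W}" using W by auto
  then have "(\<Sum>z<W. ((if z = 0 then 1 else 0) - r)\<^sup>2) = (1 - r)\<^sup>2 + (real W - 1) * r\<^sup>2"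
    using W by (simp add: of_nat_diff)
  also have "\<dots> = 2 * (1 - r)"
    using r(2) by (simp add: algebra_simps power2_eq_square)
  finally show ?thesis
    using r(1) unfolding unit_e0_minus_uniform_def r_def[symmetric]
    by (simp add: power_divide sum_divide_distrib[symmetric])
qed

lemma householder_unit_e0_minus_uniform:
  assumes "2 \<le> W"
  shows "householder (unit_e0_minus_uniform W) z 0 = 1 / sqrt W"
    and "householder (unit_e0_minus_uniform W) 0 z = 1 / sqrt W"
proof -
  define r where "r = 1 / sqrt (real W)"
  have "r < 1"
    using assms by (simp add: r_def)
  then have "(if z = 0 then 1 else 0) - 2 * unit_e0_minus_uniform W z * unit_e0_minus_uniform W 0 = r"
    unfolding unit_e0_minus_uniform_def r_def[symmetric] by (simp add: field_simps)
  then show "householder (unit_e0_minus_uniform W) z 0 = 1 / sqrt W"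
    and "householder (unit_e0_minus_uniform W) 0 z = 1 / sqrt W"
    unfolding householder_def r_def by (auto simp: mult_ac)
qed

definition U_init :: "nat \<Rightarrow> nat \<Rightarrow> qmatrix" where
  "U_init N W = mat_mult N W (answer_gate (\<lambda>z. prep (0 < z)))
     (mat_mult N W (workspace_gate (householder (unit_e0_minus_uniform W))) (hadamard N))"

definition U_mid :: "nat \<Rightarrow> nat \<Rightarrow> nat \<Rightarrow> qmatrix" where
  "U_mid N W m = mat_mult N W (answer_gate (\<lambda>z. prep (z \<le> 0)))
     (mat_mult N W (workspace_gate (householder (alternating_unit W))) (answer_gate (\<lambda>z. unprep (m - 1 < z))))"

definition U_final :: "nat \<Rightarrow> nat \<Rightarrow> nat \<Rightarrow> qmatrix" where
  "U_final N W m = mat_mult N W (hadamard N)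
     (mat_mult N W (workspace_gate (householder (unit_e0_minus_uniform W))) (answer_gate (\<lambda>z. unprep (z \<le> m - 1))))"

lemma U_init_init_state:
  assumes "2 \<le> W"
  shows "agree N W (apply_mat N W (U_init N W) init_state)
           (eig_state (\<lambda>q z. complex_of_real (1 / sqrt (2 ^ N) * (1 / sqrt W))) (\<lambda>z. 0 < z))"
proof -
  define c where "c = complex_of_real (1 / sqrt (2 ^ N))"
  have init: "init_state = zero_answer (\<lambda>q z. if z = 0 then (if q = {} then 1 else 0) else 0)"
    by (auto simp: init_state_def zero_answer_def)
  have "agree N W (apply_mat N W (hadamard N) init_state) (zero_answer (\<lambda>q z. if z = 0 then c else 0))"
    unfolding init
    by (rule agree_trans[OF hadamard_zero_answer], rule agree_zero_answerI)
      (simp add: c_def hadamard_coeff_def mult_if_zero)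
  moreover have "agree N W (apply_mat N W (workspace_gate (householder (unit_e0_minus_uniform W)))
      (zero_answer (\<lambda>q z. if z = 0 then c else 0)))
      (zero_answer (\<lambda>q z. complex_of_real (1 / sqrt (2 ^ N) * (1 / sqrt W))))"
  proof (rule agree_trans[OF workspace_gate_zero_answer], rule agree_zero_answerI)
    fix q z assume "z < W"
    have "(\<Sum>z'<W. householder (unit_e0_minus_uniform W) z z' * (if z' = 0 then c else 0))
        = householder (unit_e0_minus_uniform W) z 0 * c"
      using assms by (simp add: mult_if_zero)
    then show "(\<Sum>z'<W. householder (unit_e0_minus_uniform W) z z' * (if z' = 0 then c else 0))
        = complex_of_real (1 / sqrt (2 ^ N) * (1 / sqrt W))"
      using assms by (simp add: householder_unit_e0_minus_uniform c_def)
  qed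
  ultimately have "agree N W (apply_mat N W (workspace_gate (householder (unit_e0_minus_uniform W)))
      (apply_mat N W (hadamard N) init_state))
      (zero_answer (\<lambda>q z. complex_of_real (1 / sqrt (2 ^ N) * (1 / sqrt W))))"
    by (rule agree_apply_mat)
  then show ?thesis
    unfolding U_init_def apply_mat_mat_mult by (rule agree_apply_mat[OF _ prep_zero_answer])
qed

lemma U_mid_eig_state:
  "agree N W (apply_mat N W (U_mid N W m) (eig_state G (\<lambda>z. m - 1 < z)))
     (eig_state (\<lambda>q z. \<Sum>z'<W. householder (alternating_unit W) z z' * G q z') (\<lambda>z. z \<le> 0))"
  unfolding U_mid_def apply_mat_mat_mult
  by (rule agree_apply_mat[OF agree_apply_mat[OF unprep_eig_state workspace_gate_zero_answer] prep_zero_answer])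

lemma U_final_eig_state:
  assumes "agree N W \<psi> (eig_state G (\<lambda>z. z \<le> m - 1))" and "2 \<le> W" and "x \<subseteq> {..<N}"
  shows "apply_mat N W (U_final N W m) \<psi> (x, False, 0)
    = (\<Sum>q\<in>Pow {..<N}. complex_of_real (hadamard_coeff N x q) * (complex_of_real (1 / sqrt W) * (\<Sum>z<W. G q z)))"
proof -
  have "agree N W (apply_mat N W (U_final N W m) \<psi>)
     (zero_answer (\<lambda>q z. \<Sum>q'\<in>Pow {..<N}. complex_of_real (hadamard_coeff N q q') *
        (\<Sum>z'<W. householder (unit_e0_minus_uniform W) z z' * G q' z')))"
    unfolding U_final_def apply_mat_mat_mult
    by (rule agree_apply_mat[OF agree_apply_mat[OF agree_apply_mat[OF assms(1) unprep_eig_state]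
        workspace_gate_zero_answer] hadamard_zero_answer])
  moreover have "(x, False, 0) \<in> Basis N W"
    using assms by (simp add: mem_Basis)
  ultimately show ?thesis
    using assms(2) by (simp add: agree_def zero_answer_def householder_unit_e0_minus_uniform sum_distrib_left)
qed

definition quasiB_search :: "nat \<Rightarrow> nat \<Rightarrow> qmatrix list" where
  "quasiB_search N m = U_init N (Suc m) # map flip_gate [1..<m] @
     U_mid N (Suc m) m # map flip_gate [1..<m] @ [U_final N (Suc m) m]"

lemma length_quasiB_search: "1 \<le> m \<Longrightarrow> length (quasiB_search N m) - 1 = 2 * m"
  by (simp add: quasiB_search_def)

lemma is_unitary_quasiB_search:
  assumes "1 \<le> m"
  shows "\<forall>U\<in>set (quasiB_search N m). is_unitary N (Suc m) U"
proof -
  have W: "2 \<le> Suc m" using assms by simp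
  have "is_unitary N (Suc m) (U_init N (Suc m))" "is_unitary N (Suc m) (U_mid N (Suc m) m)"
    "is_unitary N (Suc m) (U_final N (Suc m) m)" "is_unitary N (Suc m) (flip_gate t)" for t
    unfolding U_init_def U_mid_def U_final_def flip_gate_def
    by (intro is_unitary_mat_mult is_unitary_answer_gate is_unitary_householder is_unitary_hadamard
        unitary2_prep unitary2_unprep unitary2_cond_Z sum_sq_unit_e0_minus_uniform[OF W]
        sum_sq_alternating_unit; simp)+
  then show ?thesis by (auto simp: quasiB_search_def)
qed

lemma quasiB_search_state_before_final:
  fixes N m :: nat
  assumes m: "1 \<le> m"
  defines "c \<equiv> complex_of_real (1 / sqrt (2 ^ N) * (1 / sqrt (Suc m)))"
  shows "agree N (Suc m)
    (fold (query_step N (Suc m) x) (U_init N (Suc m) # map flip_gate [1..<m] @ U_mid N (Suc m) m # map flip_gate [1..<m]) init_state)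
    (eig_state (\<lambda>q z. (\<Sum>z'<Suc m. householder (alternating_unit (Suc m)) z z' *
        (c * accumulated_phase x (\<lambda>t z. t < z) m q z')) * accumulated_phase x (\<lambda>t z. z \<le> t) m q z)
      (\<lambda>z. z \<le> m - 1))"
proof -
  have W: "2 \<le> Suc m" using m by simp
  have counting: "(Suc t < z) = ((t < z) \<noteq> (z = Suc t))" "(z \<le> Suc t) = ((z \<le> t) \<noteq> (z = Suc t))"
    for t z :: nat
    by auto
  have "agree N (Suc m) (fold (query_step N (Suc m) x) (U_init N (Suc m) # map flip_gate [1..<m]) init_state)
     (eig_state (\<lambda>q z. c * accumulated_phase x (\<lambda>t z. t < z) m q z) (\<lambda>z. m - 1 < z))"
    using query_segment[where L = "\<lambda>t z. t < z", OF counting(1) m U_init_init_state[OF W]] m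
    by (simp add: c_def)
  then have "agree N (Suc m) (apply_mat N (Suc m) (U_mid N (Suc m) m)
      (fold (query_step N (Suc m) x) (U_init N (Suc m) # map flip_gate [1..<m]) init_state))
     (eig_state (\<lambda>q z. \<Sum>z'<Suc m. householder (alternating_unit (Suc m)) z z' *
        (c * accumulated_phase x (\<lambda>t z. t < z) m q z')) (\<lambda>z. z \<le> 0))"
    using U_mid_eig_state by (rule agree_apply_mat)
  from query_segment[where L = "\<lambda>t z. z \<le> t", OF counting(2) m this] show ?thesis
    by simp
qed

lemma interference_sum:
  "(\<Sum>z<Suc m. (\<Sum>z'<Suc m. householder (alternating_unit (Suc m)) z z' *
        (c * accumulated_phase x (\<lambda>t z. t < z) m q z')) * accumulated_phase x (\<lambda>t z. z \<le> t) m q z)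
    = c * complex_of_real (real (Suc m) - 2 * (norm (alternating_phase_sum (oracle_phase x q) m))\<^sup>2 / real (Suc m))"
proof -
  define H where "H = householder (alternating_unit (Suc m))"
  define P where "P z = oracle_phase x q ^ z * cnj (oracle_phase x q) ^ (m - z)" for z
  have "(\<Sum>z'<Suc m. H z z' * (c * accumulated_phase x (\<lambda>t z. t < z) m q z'))
      * accumulated_phase x (\<lambda>t z. z \<le> t) m q z
    = c * (cnj (P z) * (\<Sum>z'<Suc m. H z z' * P z'))" if "z < Suc m" for z
  proof -
    have "(\<Sum>z'<Suc m. H z z' * (c * accumulated_phase x (\<lambda>t z. t < z) m q z'))
        = c * (\<Sum>z'<Suc m. H z z' * P z')"
      unfolding sum_distrib_left
      by (rule sum.cong) (simp_all add: P_def accumulated_phase_counting mult_ac)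
    then show ?thesis
      using that by (simp add: P_def accumulated_phase_reverse_counting accumulated_phase_counting)
  qed
  then have "(\<Sum>z<Suc m. (\<Sum>z'<Suc m. H z z' * (c * accumulated_phase x (\<lambda>t z. t < z) m q z'))
      * accumulated_phase x (\<lambda>t z. z \<le> t) m q z)
    = c * (\<Sum>z<Suc m. cnj (P z) * (\<Sum>z'<Suc m. H z z' * P z'))"
    unfolding sum_distrib_left by (intro sum.cong) auto
  then show ?thesis
    unfolding P_def H_def householder_alternating_phase_form[OF norm_oracle_phase] by simp
qed

lemma quasiB_search_amplitude:
  assumes m: "1 \<le> m" and x: "x \<subseteq> {..<N}"
  shows "run N (Suc m) x (quasiB_search N m) init_state (x, False, 0) = complex_of_real
    (\<Sum>q\<in>Pow {..<N}. (-1) ^ card (x \<inter> q) *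
       (1 - 2 * (norm (alternating_phase_sum (oracle_phase x q) m))\<^sup>2 / (real (Suc m))\<^sup>2) / 2 ^ N)"
proof -
  define c where "c = complex_of_real (1 / sqrt (2 ^ N) * (1 / sqrt (Suc m)))"
  define S where "S q = norm (alternating_phase_sum (oracle_phase x q) m)" for q
  have summand: "hadamard_coeff N x q * (1 / sqrt (Suc m)) * (1 / sqrt (2 ^ N) * (1 / sqrt (Suc m)))
        * (real (Suc m) - 2 * (S q)\<^sup>2 / real (Suc m))
      = (-1) ^ card (x \<inter> q) * (1 - 2 * (S q)\<^sup>2 / (real (Suc m))\<^sup>2) / 2 ^ N" for q
  proof -
    have "hadamard_coeff N x q * (1 / sqrt (Suc m)) * (1 / sqrt (2 ^ N) * (1 / sqrt (Suc m)))
        = (-1) ^ card (x \<inter> q) / (2 ^ N * real (Suc m))"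
      by (simp add: hadamard_coeff_def field_simps flip: real_sqrt_mult)
    moreover have "(-1) ^ card (x \<inter> q) / (2 ^ N * real (Suc m)) * (real (Suc m) - 2 * (S q)\<^sup>2 / real (Suc m))
        = (-1) ^ card (x \<inter> q) * (1 - 2 * (S q)\<^sup>2 / (real (Suc m))\<^sup>2) / (2::real) ^ N"
      by (simp add: field_simps power2_eq_square del: of_nat_Suc)
    ultimately show ?thesis by simp
  qed
  have W: "2 \<le> Suc m" using m by simp
  have "quasiB_search N m = (U_init N (Suc m) # map flip_gate [1..<m] @
      U_mid N (Suc m) m # map flip_gate [1..<m]) @ [U_final N (Suc m) m]"
    by (simp add: quasiB_search_def)
  then have "run N (Suc m) x (quasiB_search N m) init_state (x, False, 0)
      = (\<Sum>q\<in>Pow {..<N}. complex_of_real (hadamard_coeff N x q) * (complex_of_real (1 / sqrt (Suc m)) *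
          (c * complex_of_real (real (Suc m) - 2 * (S q)\<^sup>2 / real (Suc m)))))"
    using U_final_eig_state[OF quasiB_search_state_before_final[OF m] W x]
    by (simp only: run_snoc c_def S_def interference_sum)
  also have "\<dots> = complex_of_real (\<Sum>q\<in>Pow {..<N}. (-1) ^ card (x \<inter> q) *
       (1 - 2 * (S q)\<^sup>2 / (real (Suc m))\<^sup>2) / 2 ^ N)"
    unfolding of_real_sum summand[symmetric] c_def by (simp only: of_real_mult mult.assoc)
  finally show ?thesis unfolding S_def .
qed

lemma success_prob_ge:
  assumes "b \<in> Basis N W" and "out b = x"
  shows "(cmod (run N W x Us init_state b))\<^sup>2 \<le> success_prob N W Us out x"
proof -
  have "(cmod (run N W x Us init_state b))\<^sup>2 = (if out b = x then (cmod (run N W x Us init_state b))\<^sup>2 else 0)"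
    using assms(2) by simp
  also have "\<dots> \<le> success_prob N W Us out x"
    unfolding success_prob_def by (rule member_le_sum[OF assms(1)]) auto
  finally show ?thesis .
qed

lemma quasiB_search_success:
  assumes m: "1 \<le> m" and x: "x \<subseteq> {..<N}" "x \<noteq> {}"
    and W: "16 * sqrt (card x) \<le> (real (Suc m))\<^sup>2"
  shows "2/3 \<le> success_prob N (Suc m) (quasiB_search N m) fst x"
proof -
  have fin: "finite x" using x(1) finite_subset by blast
  define f where "f q = (-1) ^ card (x \<inter> q) *
     (1 - 2 * (norm (alternating_phase_sum (oracle_phase x q) m))\<^sup>2 / (real (Suc m))\<^sup>2) / 2 ^ N" for q
  have "(\<Sum>q\<in>Pow {..<N}. (7/8::real) / 2 ^ N) \<le> (\<Sum>q\<in>Pow {..<N}. f q)"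
    unfolding f_def by (intro sum_mono divide_right_mono signed_term_ge[OF fin x(2) W]) simp
  then have "7/8 \<le> (\<Sum>q\<in>Pow {..<N}. f q)"
    by (simp add: card_Pow)
  moreover have "cmod (run N (Suc m) x (quasiB_search N m) init_state (x, False, 0)) = \<bar>\<Sum>q\<in>Pow {..<N}. f q\<bar>"
    unfolding quasiB_search_amplitude[OF m x(1)] f_def[symmetric] by (simp only: norm_of_real)
  ultimately have "(7/8)\<^sup>2 \<le> (cmod (run N (Suc m) x (quasiB_search N m) init_state (x, False, 0)))\<^sup>2"
    by (intro power_mono) auto
  also have "\<dots> \<le> success_prob N (Suc m) (quasiB_search N m) fst x"
    using x(1) by (intro success_prob_ge) (auto simp: mem_Basis)
  finally show ?thesis by (simp add: power2_eq_square)
qed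

lemma exists_workspace_size:
  assumes k: "1 \<le> k"
  shows "\<exists>m. 1 \<le> m \<and> real (2 * m) \<le> 16 * real k powr (1/4) \<and> 16 * sqrt k \<le> (real (Suc m))\<^sup>2"
proof (intro exI conjI)
  define y where "y = real k powr (1/4)"
  have y: "1 \<le> y" unfolding y_def using k by (intro ge_one_powr_ge_zero) auto
  have "y\<^sup>2 = real k powr (1/4 * 2)"
    unfolding y_def by (simp add: power2_eq_square powr_add[symmetric])
  also have "\<dots> = sqrt k"
    using k by (simp add: powr_half_sqrt)
  finally have y_sq: "y\<^sup>2 = sqrt k" .
  define m where "m = 4 * nat \<lceil>y\<rceil>"
  have ceil: "real (nat \<lceil>y\<rceil>) = of_int \<lceil>y\<rceil>" using y by simp
  have m: "4 * y \<le> real m" "real m \<le> 4 * y + 4"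
    unfolding m_def of_nat_mult of_nat_numeral ceil
    using le_of_int_ceiling[of y] of_int_ceiling_le_add_one[of y] by linarith+
  show "1 \<le> m" using m y by simp
  show "real (2 * m) \<le> 16 * real k powr (1/4)"
    using m y unfolding y_def[symmetric] by simp
  have "16 * sqrt k = (4 * y)\<^sup>2" using y_sq by (simp add: power_mult_distrib)
  also have "\<dots> \<le> (real (Suc m))\<^sup>2" using m y by (intro power_mono) auto
  finally show "16 * sqrt k \<le> (real (Suc m))\<^sup>2" .
qed

theorem theorem3:
  "\<exists>C::real. \<forall>N k::nat. 1 \<le> k \<and> 2 * k < N \<longrightarrow>
     (\<exists>W Us out. W > 0 \<and> Us \<noteq> [] \<and> (\<forall>U\<in>set Us. is_unitary N W U) \<and>
        real (length Us - 1) \<le> C * real k powr (1/4) \<and>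
        (\<forall>x. x \<subseteq> {..<N} \<and> card x = k \<longrightarrow> success_prob N W Us out x \<ge> 2/3))"
proof (rule exI[of _ 16], intro allI impI)
  fix N k :: nat
  assume k: "1 \<le> k \<and> 2 * k < N"
  \<comment> \<open>only 1 \<le> k is used: the algorithm needs no bound on k relative to N\<close>
  then obtain m where m: "1 \<le> m" "real (2 * m) \<le> 16 * real k powr (1/4)" "16 * sqrt k \<le> (real (Suc m))\<^sup>2"
    using exists_workspace_size by blast
  show "\<exists>W Us out. W > 0 \<and> Us \<noteq> [] \<and> (\<forall>U\<in>set Us. is_unitary N W U) \<and>
      real (length Us - 1) \<le> 16 * real k powr (1/4) \<and>
      (\<forall>x. x \<subseteq> {..<N} \<and> card x = k \<longrightarrow> success_prob N W Us out x \<ge> 2/3)"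
  proof (intro exI[of _ "Suc m"] exI[of _ "quasiB_search N m"] exI[of _ fst] conjI allI impI)
    show "0 < Suc m" by simp
    show "quasiB_search N m \<noteq> []" by (simp add: quasiB_search_def)
    show "\<forall>U\<in>set (quasiB_search N m). is_unitary N (Suc m) U"
      by (rule is_unitary_quasiB_search[OF m(1)])
    show "real (length (quasiB_search N m) - 1) \<le> 16 * real k powr (1/4)"
      unfolding length_quasiB_search[OF m(1)] using m(2) by simp
    fix x assume x: "x \<subseteq> {..<N} \<and> card x = k"
    then have "x \<noteq> {}" using k by auto
    then show "success_prob N (Suc m) (quasiB_search N m) fst x \<ge> 2/3"
      using quasiB_search_success[OF m(1)] x m(3) by simp
  qed
qed

end
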